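(* Let $l$ be a projective line in $\mathbb{CP}^3$. Then $l$ corresponds to a two-sphere (or a point) contained in the three-sphere $S^3$ if and only if $l=l^\perp$ with respect to the hermitian form $h$ on $\mathbb{C}^4$.
   Context: $\mathbb{H}$ denotes the quaternions, $\mathbb{H}=\mathbb{C}\oplus j\mathbb{C}$; $\mathbb{H}^2$ is a right $\mathbb{H}$-vector space identified with $\mathbb{C}^4$; $\mathbb{HP}^1=\{v\mathbb{H}\}\cong S^4$, $\mathbb{CP}^3=\mathbb{P}(\mathbb{C}^4)$. Under the twistor projection $v\mathbb{C}\mapsto v\mathbb{H}$, each projective line of $\mathbb{CP}^3$ is either a twistor fibre (the line through $[v],[vj]$, corresponding to the point $v\mathbb{H}$) or the twistor lift of a round two-sphere, whose image under the projection is that two-sphere. Fix an $\mathbb{H}$-basis $e_1,e_2$ and the quaternionic hermitian form $\mathfrak{h}(e_1a+e_2b,e_1c+e_2d)=\bar a d+\bar b c$; write $\mathfrak{h}=h+j\omega$ with $h,\omega$ $\mathbb{C}$-valued; $h$ is a hermitian form on $\mathbb{C}^4$. $S^3=\{x\mathbb{H}:\mathfrak{h}(x,x)=0\}$. For a projective line $l$, $l^\perp=\mathbb{P}\{x:h(x,y)=0\ \forall y\in l\}$. A line "corresponds to a two-sphere or point contained in $S^3$" if its image under the twistor projection is contained in $S^3$. *)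

theory Defs
  imports "HOL-Analysis.Analysis"
begin

text \<open>Quaternions H = C + jC: the pair (z,w) stands for z + j w.
  Multiplication: (z1 + j w1)(z2 + j w2) = (z1 z2 - conj w1 w2) + j (conj z1 w2 + w1 z2),
  using z j = j (conj z).\<close>

type_synonym quat = "complex \<times> complex"

definition qmult :: "quat \<Rightarrow> quat \<Rightarrow> quat" where
  "qmult p q = (fst p * fst q - cnj (snd p) * snd q, cnj (fst p) * snd q + snd p * fst q)"

definition qadd :: "quat \<Rightarrow> quat \<Rightarrow> quat" where
  "qadd p q = (fst p + fst q, snd p + snd q)"

definition qconj :: "quat \<Rightarrow> quat" where
  "qconj p = (cnj (fst p), - snd p)"

text \<open>H^2 = e1 H + e2 H identified with C^4: e1 (a1 + j a2) + e2 (b1 + j b2)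
  corresponds to (a1, a2, b1, b2).  The complex structure is right multiplication
  by complex scalars, i.e. componentwise scalar multiplication.\<close>

type_synonym C4 = "complex ^ 4"

definition coordA :: "C4 \<Rightarrow> quat" where "coordA x = (x $ 1, x $ 2)"
definition coordB :: "C4 \<Rightarrow> quat" where "coordB x = (x $ 3, x $ 4)"

definition mkC4 :: "quat \<Rightarrow> quat \<Rightarrow> C4" where
  "mkC4 a b = vector [fst a, snd a, fst b, snd b]"

definition rmul :: "C4 \<Rightarrow> quat \<Rightarrow> C4" where
  "rmul x q = mkC4 (qmult (coordA x) q) (qmult (coordB x) q)"

text \<open>The quaternionic hermitian form h(e1 a + e2 b, e1 c + e2 d) = conj a d + conj b c,
  and its complex part h (where hq = h + j omega).\<close>
definition hq :: "C4 \<Rightarrow> C4 \<Rightarrow> quat" where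
  "hq x y = qadd (qmult (qconj (coordA x)) (coordB y)) (qmult (qconj (coordB x)) (coordA y))"

definition hform :: "C4 \<Rightarrow> C4 \<Rightarrow> complex" where
  "hform x y = fst (hq x y)"

text \<open>Points of CP^3 (complex lines vC) and of HP^1 (quaternionic lines vH).\<close>
definition cpt :: "C4 \<Rightarrow> C4 set" where
  "cpt v = range (\<lambda>c::complex. c *s v)"

definition hpt :: "C4 \<Rightarrow> C4 set" where
  "hpt v = range (\<lambda>q. rmul v q)"

definition CP3 :: "C4 set set" where
  "CP3 = {cpt v | v. v \<noteq> 0}"

definition cindep2 :: "C4 \<Rightarrow> C4 \<Rightarrow> bool" where
  "cindep2 u v \<longleftrightarrow> (\<forall>a b::complex. a *s u + b *s v = 0 \<longrightarrow> a = 0 \<and> b = 0)"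

definition cspan2 :: "C4 \<Rightarrow> C4 \<Rightarrow> C4 set" where
  "cspan2 u v = {a *s u + b *s v | a b::complex. True}"

definition is_proj_line :: "C4 set set \<Rightarrow> bool" where
  "is_proj_line l \<longleftrightarrow> (\<exists>u v. cindep2 u v \<and> l = {cpt x | x. x \<in> cspan2 u v \<and> x \<noteq> 0})"

definition hperp :: "C4 set set \<Rightarrow> C4 set set" where
  "hperp l = {cpt x | x. x \<noteq> 0 \<and> (\<forall>p\<in>l. \<forall>y\<in>p. hform x y = 0)}"

definition twistor_img :: "C4 set set \<Rightarrow> C4 set set" where
  "twistor_img l = {hpt v | v. v \<noteq> 0 \<and> cpt v \<in> l}"

definition S3 :: "C4 set set" where
  "S3 = {hpt x | x. x \<noteq> 0 \<and> hq x x = (0, 0)}"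

end

theory Submission
  imports Defs
begin

text \<open>Let W be the complex 2-plane underlying the line l. The quaternionic form
  satisfies h(x q, x q) = |q|^2 h(x, x) and its j-part vanishes on the diagonal, so the
  twistor image of l lies in S^3 exactly when every vector of W is h-null. By polarisation
  this says W is contained in its h-orthogonal complement, which is 2-dimensional because
  h is nondegenerate; hence it says W = W^perp. Conversely, if W = W^perp, every vector
  of W is orthogonal to itself.\<close>

lemma hform_eq: "hform x y = cnj (x$1) * y$3 + cnj (x$2) * y$4 + cnj (x$3) * y$1 + cnj (x$4) * y$2"
  unfolding hform_def hq_def qadd_def qmult_def qconj_def coordA_def coordB_def by simp

lemma hform_add_left: "hform (x + y) z = hform x z + hform y z"
  by (simp add: hform_eq algebra_simps)

lemma hform_add_right: "hform x (y + z) = hform x y + hform x z"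
  by (simp add: hform_eq algebra_simps)

lemma hform_diff_left: "hform (x - y) z = hform x z - hform y z"
  by (simp add: hform_eq algebra_simps)

lemma hform_smult_left: "hform (c *s x) y = cnj c * hform x y"
  by (simp add: hform_eq algebra_simps)

lemma hform_smult_right: "hform x (c *s y) = c * hform x y"
  by (simp add: hform_eq algebra_simps)

lemma hform_commute: "hform y x = cnj (hform x y)"
  by (simp add: hform_eq algebra_simps)

lemma hform_nondegenerate:
  assumes "\<And>y. hform x y = 0"
  shows "x = 0"
proof -
  have "hform x (axis i 1) = 0" for i using assms .
  from this[of 1] this[of 2] this[of 3] this[of 4] show ?thesis
    by (simp add: hform_eq axis_def vec_eq_iff forall_4)
qed

lemma hform_eq_0_on_span:
  assumes "\<forall>y\<in>S. hform x y = 0" and "y \<in> vec.span S"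
  shows "hform x y = 0"
proof -
  have "hform x 0 = 0" by (simp add: hform_eq)
  then have "vec.subspace {y. hform x y = 0}"
    by (simp add: vec.subspace_def hform_add_right hform_smult_right)
  then have "vec.span S \<subseteq> {y. hform x y = 0}"
    using assms(1) by (intro vec.span_minimal) auto
  with assms(2) show ?thesis by blast
qed

lemma hform_eq_0_if_isotropic_subspace:
  assumes "vec.subspace W" and "\<forall>x\<in>W. hform x x = 0" and "x \<in> W" and "y \<in> W"
  shows "hform x y = 0"
proof -
  have "hform (x + y) (x + y) = 0" and "hform (x + \<i> *s y) (x + \<i> *s y) = 0"
    using assms by (simp_all add: vec.subspace_add vec.subspace_scale)
  then have "hform x y + hform y x = 0" and "\<i> * hform x y - \<i> * hform y x = 0"
    using assms(2-4) by (simp_all add: hform_add_left hform_add_right hform_smult_left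
        hform_smult_right algebra_simps)
  then show ?thesis by (auto simp: algebra_simps)
qed

lemma hq_self_eq_0_iff: "hq x x = (0, 0) \<longleftrightarrow> hform x x = 0"
  unfolding hform_def hq_def qadd_def qmult_def qconj_def coordA_def coordB_def
  by (simp add: algebra_simps)

lemma rmul_nth:
  "rmul x q $ 1 = x$1 * fst q - cnj (x$2) * snd q"
  "rmul x q $ 2 = cnj (x$1) * snd q + x$2 * fst q"
  "rmul x q $ 3 = x$3 * fst q - cnj (x$4) * snd q"
  "rmul x q $ 4 = cnj (x$3) * snd q + x$4 * fst q"
  by (simp_all add: rmul_def mkC4_def vector_def qmult_def coordA_def coordB_def)

lemma hform_rmul_self:
  "hform (rmul x q) (rmul x q) = ((cmod (fst q))\<^sup>2 + (cmod (snd q))\<^sup>2) * hform x x"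
  unfolding hform_eq rmul_nth
  by (simp add: complex_eq_iff cmod_def power2_eq_square algebra_simps)

lemma mem_hpt_self: "x \<in> hpt x"
proof -
  have "rmul x (1, 0) = x" by (simp add: vec_eq_iff forall_4 rmul_nth)
  then show ?thesis unfolding hpt_def by (metis rangeI)
qed

lemma hpt_mem_S3_iff:
  assumes "x \<noteq> 0"
  shows "hpt x \<in> S3 \<longleftrightarrow> hform x x = 0"
proof
  assume "hpt x \<in> S3"
  then obtain y where "hpt x = hpt y" and "hq y y = (0, 0)" unfolding S3_def by blast
  moreover from \<open>hpt x = hpt y\<close> obtain q where "x = rmul y q"
    using mem_hpt_self[of x] unfolding hpt_def by auto
  ultimately show "hform x x = 0" by (simp add: hform_rmul_self hq_self_eq_0_iff)
qed (use assms in \<open>auto simp: S3_def hq_self_eq_0_iff\<close>)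

lemma exists_vector_completing_basis:
  fixes S :: "('a::field ^ 'n) set"
  assumes "vec.independent S" and "card S + 1 = CARD('n)"
  obtains z where "vec.span (insert z S) = UNIV"
proof -
  have "finite S" using assms(1) by (rule vec.finiteI_independent)
  have "vec.span S \<noteq> UNIV"
  proof
    assume "vec.span S = UNIV"
    then have "card S = CARD('n)"
      using vec.dim_span_eq_card_independent[OF assms(1)] vec_dim_card by metis
    with assms(2) show False by simp
  qed
  then obtain z where z: "z \<notin> vec.span S" by blast
  then have "z \<notin> S" using vec.span_base by blast
  have "vec.independent (insert z S)" using z assms(1) by (rule vec.independent_insertI)
  moreover have "card (insert z S) = vec.dim (UNIV :: ('a ^ 'n) set)"
    using \<open>finite S\<close> \<open>z \<notin> S\<close> assms(2) vec_dim_card by (metis card_insert_disjoint Suc_eq_plus1)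
  ultimately have "UNIV \<subseteq> vec.span (insert z S)"
    using vec.card_eq_dim[of "insert z S" UNIV] \<open>finite S\<close> by simp
  then show thesis using that by blast
qed

lemma cspan2_eq_span: "cspan2 u v = vec.span {u, v}"
  by (auto simp: cspan2_def vec.span_insert vec.span_singleton algebra_simps)

lemma cindep2_imp_independent:
  assumes "cindep2 u v"
  shows "vec.independent {u, v}" and "u \<noteq> 0" and "v \<noteq> 0" and "u \<noteq> v"
proof -
  have comb: "a = 0 \<and> b = 0" if "a *s u + b *s v = 0" for a b
    using assms that unfolding cindep2_def by blast
  show "u \<noteq> 0" using comb[of 1 0] by auto
  show "v \<noteq> 0" using comb[of 0 1] by auto
  show "u \<noteq> v" using comb[of 1 "-1"] by (auto simp: vector_sneg_minus1[symmetric])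
  have "u \<notin> vec.span {v}"
  proof
    assume "u \<in> vec.span {v}"
    then obtain k where "u = k *s v" by (auto simp: vec.span_singleton)
    then show False using comb[of 1 "- k"] by (simp add: vector_sneg_minus1[symmetric] vector_smult_assoc)
  qed
  with \<open>v \<noteq> 0\<close> show "vec.independent {u, v}" by (simp add: vec.independent_insert)
qed

lemma mem_span_if_orthogonal_to_isotropic_plane:
  assumes indep: "cindep2 u v"
    and iso: "hform u u = 0" "hform u v = 0" "hform v v = 0"
    and orth: "hform u y = 0" "hform v y = 0"
  shows "y \<in> vec.span {u, v}"
proof (rule ccontr)
  assume y: "y \<notin> vec.span {u, v}"
  note uv = cindep2_imp_independent[OF indep]
  have "vec.independent {y, u, v}" using y uv(1) by (rule vec.independent_insertI)
  moreover have "y \<noteq> u" and "y \<noteq> v" using y vec.span_base[of _ "{u, v}"] by auto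
  then have "card {y, u, v} + 1 = CARD(4)" using uv(4) by simp
  ultimately obtain z where spans: "vec.span {z, y, u, v} = UNIV"
    by (rule exists_vector_completing_basis)
  have orthogonal_to_all: "x = 0" if "\<forall>t\<in>{z, y, u, v}. hform x t = 0" for x
    using that spans hform_eq_0_on_span by (intro hform_nondegenerate) blast
  \<comment> \<open>the combination of u and v orthogonal to z is orthogonal to the whole basis\<close>
  define \<alpha> where "\<alpha> = hform u z"
  define \<beta> where "\<beta> = hform v z"
  have "hform v u = 0" using iso(2) hform_commute[of u v] by simp
  then have "cnj \<beta> *s u - cnj \<alpha> *s v = 0"
    using iso orth by (intro orthogonal_to_all) (auto simp: hform_diff_left hform_smult_left \<alpha>_def \<beta>_def)
  then have "cnj \<beta> *s u + (- cnj \<alpha>) *s v = 0"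
    by (simp add: vector_sneg_minus1[symmetric] vector_smult_assoc)
  then have "- cnj \<alpha> = 0" using indep unfolding cindep2_def by blast
  then have "\<alpha> = 0" by simp
  then have "u = 0" using iso orth by (intro orthogonal_to_all) (auto simp: \<alpha>_def)
  with uv(2) show False ..
qed

definition proj_line :: "C4 \<Rightarrow> C4 \<Rightarrow> C4 set set" where
  "proj_line u v = {cpt x | x. x \<in> vec.span {u, v} \<and> x \<noteq> 0}"

lemma is_proj_line_iff: "is_proj_line l \<longleftrightarrow> (\<exists>u v. cindep2 u v \<and> l = proj_line u v)"
  by (simp add: is_proj_line_def proj_line_def cspan2_eq_span)

lemma mem_cpt_self: "x \<in> cpt x"
  unfolding cpt_def by (metis rangeI vector_smult_lid)

lemma mem_span_if_mem_proj_line: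
  assumes "p \<in> proj_line u v" and "y \<in> p"
  shows "y \<in> vec.span {u, v}"
  using assms by (auto simp: proj_line_def cpt_def intro: vec.span_scale)

lemma cpt_mem_proj_line: "x \<in> vec.span {u, v} \<Longrightarrow> x \<noteq> 0 \<Longrightarrow> cpt x \<in> proj_line u v"
  unfolding proj_line_def by blast

lemma hperp_proj_line:
  assumes "cindep2 u v"
  shows "hperp (proj_line u v) = {cpt x | x. x \<noteq> 0 \<and> hform x u = 0 \<and> hform x v = 0}"
proof -
  have "(\<forall>p\<in>proj_line u v. \<forall>y\<in>p. hform x y = 0) \<longleftrightarrow> hform x u = 0 \<and> hform x v = 0" for x
  proof
    assume "\<forall>p\<in>proj_line u v. \<forall>y\<in>p. hform x y = 0"
    moreover have "cpt u \<in> proj_line u v" and "cpt v \<in> proj_line u v"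
      using cindep2_imp_independent[OF assms] by (auto intro: cpt_mem_proj_line vec.span_base)
    ultimately show "hform x u = 0 \<and> hform x v = 0" using mem_cpt_self by blast
  next
    assume "hform x u = 0 \<and> hform x v = 0"
    then have "\<forall>y\<in>{u, v}. hform x y = 0" by simp
    then show "\<forall>p\<in>proj_line u v. \<forall>y\<in>p. hform x y = 0"
      using hform_eq_0_on_span mem_span_if_mem_proj_line by blast
  qed
  then show ?thesis unfolding hperp_def by simp
qed

lemma twistor_img_proj_line_subset_S3_iff:
  "twistor_img (proj_line u v) \<subseteq> S3 \<longleftrightarrow> (\<forall>x\<in>vec.span {u, v}. hform x x = 0)"
proof
  assume img: "twistor_img (proj_line u v) \<subseteq> S3"
  show "\<forall>x\<in>vec.span {u, v}. hform x x = 0"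
  proof
    fix x assume x: "x \<in> vec.span {u, v}"
    show "hform x x = 0"
    proof (cases "x = 0")
      case False
      with x have "hpt x \<in> twistor_img (proj_line u v)"
        unfolding twistor_img_def by (blast intro: cpt_mem_proj_line)
      with img False show ?thesis using hpt_mem_S3_iff by blast
    qed (simp add: hform_eq)
  qed
next
  assume "\<forall>x\<in>vec.span {u, v}. hform x x = 0"
  then show "twistor_img (proj_line u v) \<subseteq> S3"
    unfolding twistor_img_def
    using hpt_mem_S3_iff mem_span_if_mem_proj_line mem_cpt_self by blast
qed

lemma proj_line_eq_hperp_iff:
  assumes indep: "cindep2 u v"
  shows "proj_line u v = hperp (proj_line u v) \<longleftrightarrow> (\<forall>x\<in>vec.span {u, v}. hform x x = 0)"
proof
  assume eq: "proj_line u v = hperp (proj_line u v)"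
  show "\<forall>x\<in>vec.span {u, v}. hform x x = 0"
  proof
    fix x assume x: "x \<in> vec.span {u, v}"
    show "hform x x = 0"
    proof (cases "x = 0")
      case False
      with x eq have "cpt x \<in> hperp (proj_line u v)" by (metis cpt_mem_proj_line)
      then obtain y where "cpt x = cpt y" and "hform y u = 0" and "hform y v = 0"
        unfolding hperp_proj_line[OF indep] by blast
      then obtain c where "x = c *s y" using mem_cpt_self[of x] by (auto simp: cpt_def)
      moreover have "hform y x = 0"
        using x \<open>hform y u = 0\<close> \<open>hform y v = 0\<close> by (intro hform_eq_0_on_span) auto
      ultimately show ?thesis by (simp add: hform_smult_left)
    qed (simp add: hform_eq)
  qed
next
  assume iso: "\<forall>x\<in>vec.span {u, v}. hform x x = 0"
  have u: "u \<in> vec.span {u, v}" and v: "v \<in> vec.span {u, v}" by (simp_all add: vec.span_base)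
  have orth: "hform x y = 0" if "x \<in> vec.span {u, v}" "y \<in> vec.span {u, v}" for x y
    using iso that by (intro hform_eq_0_if_isotropic_subspace) simp_all
  have "x \<in> vec.span {u, v} \<longleftrightarrow> hform x u = 0 \<and> hform x v = 0" for x
  proof
    assume "hform x u = 0 \<and> hform x v = 0"
    then have "hform u x = 0" and "hform v x = 0" by (metis complex_cnj_zero hform_commute)+
    with indep orth u v show "x \<in> vec.span {u, v}"
      by (intro mem_span_if_orthogonal_to_isotropic_plane) auto
  qed (use orth u v in blast)
  then show "proj_line u v = hperp (proj_line u v)"
    unfolding hperp_proj_line[OF indep] unfolding proj_line_def by blast
qed

theorem mainTheorem7:
  fixes l :: "C4 set set"
  assumes "is_proj_line l"
  shows "twistor_img l \<subseteq> S3 \<longleftrightarrow> l = hperp l"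
proof -
  obtain u v where "cindep2 u v" and "l = proj_line u v"
    using assms unfolding is_proj_line_iff by blast
  then show ?thesis
    by (simp add: twistor_img_proj_line_subset_S3_iff proj_line_eq_hperp_iff)
qed

end
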